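(* Let $h>0$, let $N_t$ be a positive integer and $T=\sqrt{N_t h/4}$. For $u>0$ and $x\in[0,1]$ let $$f(u,x) = \frac{x}{\pi}\,\frac{1}{\sqrt{u}}\,\frac{e^{\sqrt{u}-T}}{e^{2(\sqrt{u}-T)}+x},\qquad I(x)=\int_0^{4T^2} f(u,x)\,du,\qquad S(x) = h\sum_{j=1}^{N_t} f(jh,x).$$ Then for every $x\in[0,e^{4-2T}]$, $$|I(x)-S(x)| < 2e^{2-T} < 15\,e^{-T}.$$ *)

theory Defs
  imports "HOL-Analysis.Analysis"
begin

definition fA2 :: "real \<Rightarrow> real \<Rightarrow> real \<Rightarrow> real" where
  "fA2 T u x = (x / pi) * (1 / sqrt u) * (exp (sqrt u - T) / (exp (2 * (sqrt u - T)) + x))"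

end

theory Submission
  imports Defs
begin

text \<open>
  With \<open>u = s\<^sup>2\<close> and \<open>E = exp (s - T)\<close> the integrand becomes
  \<open>(2x/\<pi>) E / (E\<^sup>2 + x) ds\<close>, whose primitive is an arctangent; hence the integral lies in
  \<open>[0, \<surd>x]\<close>. The Riemann sum is bounded termwise by the increments of a primitive of
  \<open>(5/2)(x/\<pi>) / (\<surd>x + E)\<close>, a decreasing majorant of \<open>(2x/\<pi>) E / (E\<^sup>2 + x)\<close> by AM-GM; the
  telescoped sum is at most \<open>(5/2)(\<surd>x/\<pi>) ln (1 + e\<^sup>2) < 2\<surd>x\<close> once \<open>\<surd>x \<le> e\<^bsup>2-T\<^esup>\<close>.
  So both quantities lie in \<open>[0, 2\<surd>x)\<close>.
\<close>

lemma fA2_nonneg: "0 \<le> x \<Longrightarrow> 0 \<le> u \<Longrightarrow> 0 \<le> fA2 T u x"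
  unfolding fA2_def by (intro mult_nonneg_nonneg divide_nonneg_nonneg add_nonneg_nonneg) auto

lemma fA2_square:
  assumes "0 \<le> s"
  shows "fA2 T (s\<^sup>2) x = x / pi / s * (exp (s - T) / ((exp (s - T))\<^sup>2 + x))"
  using assms by (simp add: fA2_def exp_double[symmetric] algebra_simps)

definition fA2_primitive :: "real \<Rightarrow> real \<Rightarrow> real \<Rightarrow> real" where
  "fA2_primitive T x u = 2 * sqrt x / pi * arctan (exp (sqrt u - T) / sqrt x)"

lemma fA2_primitive_bounds:
  assumes "0 < x"
  shows "0 \<le> fA2_primitive T x u" and "fA2_primitive T x u \<le> sqrt x"
proof -
  have "0 \<le> arctan (exp (sqrt u - T) / sqrt x)" "arctan (exp (sqrt u - T) / sqrt x) \<le> pi / 2"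
    using assms less_imp_le[OF arctan_ubound] by simp_all
  then show "0 \<le> fA2_primitive T x u" "fA2_primitive T x u \<le> sqrt x"
    using assms by (auto simp: fA2_primitive_def field_simps)
qed

lemma has_real_derivative_fA2_primitive:
  assumes "0 < x" and "0 < u"
  shows "(fA2_primitive T x has_real_derivative fA2 T u x) (at u)"
proof -
  have "exp (2 * (sqrt u - T)) = exp (sqrt u - T) * exp (sqrt u - T)"
    by (simp add: exp_add[symmetric])
  moreover have "sqrt x * sqrt x = x"
    using assms by simp
  moreover have "0 < sqrt x" "0 < sqrt u"
    using assms by simp_all
  ultimately show ?thesis
    unfolding fA2_primitive_def [abs_def] using assms
    by (auto intro!: derivative_eq_intros) (simp add: fA2_def field_simps power2_eq_square)
qed

lemma fA2_has_integral:
  assumes "0 < x" and "0 \<le> a" and "a \<le> b"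
  shows "((\<lambda>u. fA2 T u x) has_integral (fA2_primitive T x b - fA2_primitive T x a)) {a..b}"
proof (rule fundamental_theorem_of_calculus_interior)
  show "continuous_on {a..b} (fA2_primitive T x)"
    unfolding fA2_primitive_def [abs_def] using \<open>0 < x\<close> by (intro continuous_intros) auto
  fix u assume "u \<in> {a<..<b}"
  then show "(fA2_primitive T x has_vector_derivative fA2 T u x) (at u)"
    using assms has_real_derivative_fA2_primitive
    by (simp add: has_real_derivative_iff_has_vector_derivative[symmetric])
qed (fact \<open>a \<le> b\<close>)

lemma integral_fA2_bounds:
  assumes "0 < x" and "0 \<le> a" and "a \<le> b"
  shows "0 \<le> integral {a..b} (\<lambda>u. fA2 T u x)" and "integral {a..b} (\<lambda>u. fA2 T u x) \<le> sqrt x"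
proof -
  note I = fA2_has_integral[OF assms, of T]
  show "0 \<le> integral {a..b} (\<lambda>u. fA2 T u x)"
    using I assms by (intro integral_nonneg fA2_nonneg) auto
  show "integral {a..b} (\<lambda>u. fA2 T u x) \<le> sqrt x"
    using integral_unique[OF I] fA2_primitive_bounds(1)[OF \<open>0 < x\<close>, of T a]
      fA2_primitive_bounds(2)[OF \<open>0 < x\<close>, of T b] by linarith
qed

lemma two_mult_div_sq_add_sq_le:
  fixes E r :: real
  assumes "0 < E" and "0 < r"
  shows "2 * E / (E\<^sup>2 + r\<^sup>2) \<le> 5 / (2 * (r + E))"
proof -
  have "0 \<le> (E - 2 * r)\<^sup>2 + r\<^sup>2" by simp
  then have "4 * E * (r + E) \<le> 5 * (E\<^sup>2 + r\<^sup>2)"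
    by (simp add: power2_eq_square algebra_simps)
  with assms show ?thesis
    by (simp add: divide_simps add_pos_pos algebra_simps)
qed

definition fA2_sum_primitive :: "real \<Rightarrow> real \<Rightarrow> real \<Rightarrow> real" where
  "fA2_sum_primitive T x s = 5/2 * sqrt x / pi * (s - ln (sqrt x + exp (s - T)))"

lemma has_real_derivative_fA2_sum_primitive:
  assumes "0 < x"
  shows "(fA2_sum_primitive T x has_real_derivative 5/2 * x / pi / (sqrt x + exp (s - T))) (at s)"
proof -
  have "0 < sqrt x + exp (s - T)" "sqrt x * sqrt x = x"
    using assms by (simp_all add: add_pos_pos)
  then show ?thesis
    unfolding fA2_sum_primitive_def [abs_def] using assms
    by (auto intro!: derivative_eq_intros) (simp add: field_simps)
qed

lemma fA2_le_sum_primitive_diff: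
  assumes "0 < x" and "0 \<le> a" and "a < b"
  shows "(b\<^sup>2 - a\<^sup>2) * fA2 T (b\<^sup>2) x \<le> fA2_sum_primitive T x b - fA2_sum_primitive T x a"
proof -
  define K where "K s = 5/2 * x / pi / (sqrt x + exp (s - T))" for s
  define E where "E = exp (b - T)"
  have "0 < E" by (simp add: E_def)
  have "b\<^sup>2 - a\<^sup>2 \<le> 2 * (b - a) * b"
    using zero_le_power2[of "b - a"] by (simp add: power2_eq_square algebra_simps)
  then have "(b\<^sup>2 - a\<^sup>2) / b \<le> 2 * (b - a)"
    using assms by (simp add: pos_divide_le_eq)
  have "(b\<^sup>2 - a\<^sup>2) * fA2 T (b\<^sup>2) x = (b\<^sup>2 - a\<^sup>2) / b * (x / pi * (E / (E\<^sup>2 + x)))"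
    using assms by (simp add: fA2_square E_def)
  also have "\<dots> \<le> 2 * (b - a) * (x / pi * (E / (E\<^sup>2 + x)))"
    using \<open>(b\<^sup>2 - a\<^sup>2) / b \<le> 2 * (b - a)\<close> assms \<open>0 < E\<close> by (intro mult_right_mono) auto
  also have "\<dots> = (b - a) * (x / pi) * (2 * E / (E\<^sup>2 + (sqrt x)\<^sup>2))"
    using assms by simp
  also have "\<dots> \<le> (b - a) * (x / pi) * (5 / (2 * (sqrt x + E)))"
    using assms \<open>0 < E\<close> by (intro mult_left_mono two_mult_div_sq_add_sq_le) auto
  also have "\<dots> = (b - a) * K b"
    by (simp add: K_def E_def algebra_simps)
  also have "\<dots> \<le> fA2_sum_primitive T x b - fA2_sum_primitive T x a"
  proof -
    \<comment> \<open>\<open>K\<close> is decreasing, so the mean value theorem bounds the increment below by \<open>(b - a) * K b\<close>\<close>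
    have "(fA2_sum_primitive T x has_real_derivative K s) (at s)" for s
      unfolding K_def by (rule has_real_derivative_fA2_sum_primitive[OF \<open>0 < x\<close>])
    then obtain z where "a < z" "z < b" and mvt:
        "fA2_sum_primitive T x b - fA2_sum_primitive T x a = (b - a) * K z"
      using MVT2[OF \<open>a < b\<close>] by blast
    have "K b \<le> K z"
      unfolding K_def using \<open>z < b\<close> \<open>0 < x\<close> by (intro divide_left_mono) (auto simp: add_pos_pos)
    then show ?thesis
      unfolding mvt using \<open>a < b\<close> by (simp add: mult_left_mono)
  qed
  finally show ?thesis .
qed

lemma fA2_riemann_sum_le_sum_primitive:
  assumes "0 < x" and "0 < h"
  shows "h * (\<Sum>j=1..N. fA2 T (real j * h) x)
           \<le> fA2_sum_primitive T x (sqrt (real N * h)) - fA2_sum_primitive T x 0"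
proof -
  define G where "G j = fA2_sum_primitive T x (sqrt (real j * h))" for j :: nat
  have "h * fA2 T (real j * h) x \<le> G j - G (j - 1)" if "1 \<le> j" for j
  proof -
    define a b where "a = sqrt (real (j - 1) * h)" and "b = sqrt (real j * h)"
    have "0 \<le> a" "a < b" "b\<^sup>2 = real j * h"
      using \<open>0 < h\<close> that by (simp_all add: a_def b_def)
    moreover have "b\<^sup>2 - a\<^sup>2 = h"
      using \<open>0 < h\<close> that by (simp add: a_def b_def of_nat_diff algebra_simps)
    ultimately show ?thesis
      using fA2_le_sum_primitive_diff[OF \<open>0 < x\<close>, of a b T] by (simp add: G_def a_def b_def)
  qed
  then have "h * (\<Sum>j=1..N. fA2 T (real j * h) x) \<le> (\<Sum>j=1..N. G j - G (j - 1))"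
    by (auto simp: sum_distrib_left intro!: sum_mono)
  also have "\<dots> = G N - G 0"
    using sum_telescope''[of 0 N G] by simp
  finally show ?thesis by (simp add: G_def)
qed

lemma fA2_sum_primitive_increment_le:
  assumes "0 < x" and "sqrt x \<le> exp (2 - T)"
  shows "fA2_sum_primitive T x (2 * T) - fA2_sum_primitive T x 0
           \<le> 5/2 * sqrt x / pi * ln (1 + exp 2)"
proof -
  define r where "r = sqrt x"
  have "0 < r" using assms by (simp add: r_def)
  have "exp T * r \<le> exp 2"
    using assms mult_left_mono[of r "exp (2 - T)" "exp T"] by (simp add: r_def exp_diff)
  have "exp (2 * T) * (r + exp (- T)) = exp T * (exp T * r + 1)"
    by (simp add: exp_add[symmetric] exp_minus_inverse algebra_simps)
  also have "\<dots> \<le> exp T * (exp 2 + 1)"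
    using \<open>exp T * r \<le> exp 2\<close> by simp
  also have "\<dots> \<le> (1 + exp 2) * (r + exp T)"
    using \<open>0 < r\<close> by (simp add: algebra_simps)
  finally have "exp (2 * T) * (r + exp (- T)) \<le> (1 + exp 2) * (r + exp T)" .
  moreover have pos: "0 < r + exp (- T)" "0 < r + exp T" "0 < 1 + exp (2 :: real)"
    using \<open>0 < r\<close> by (simp_all add: add_pos_pos)
  ultimately have "ln (exp (2 * T) * (r + exp (- T))) \<le> ln ((1 + exp 2) * (r + exp T))"
    by (intro ln_mono) auto
  then have "2 * T + ln (r + exp (- T)) - ln (r + exp T) \<le> ln (1 + exp 2)"
    using pos by (simp add: ln_mult)
  then have "5/2 * r / pi * (2 * T + ln (r + exp (- T)) - ln (r + exp T))
      \<le> 5/2 * r / pi * ln (1 + exp 2)"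
    using \<open>0 < r\<close> by (intro mult_left_mono) auto
  then show ?thesis
    by (simp add: fA2_sum_primitive_def r_def[symmetric] right_diff_distrib distrib_left)
qed

lemma ln_one_plus_exp_two_less: "ln (1 + exp 2) < (5/2 :: real)"
proof -
  have "3 \<le> exp (2 :: real)"
    using exp_ge_add_one_self[of "2 :: real"] by simp
  then have "1 + exp 2 < exp 2 * (1 + 1/2 :: real)"
    by simp
  also have "\<dots> \<le> exp 2 * exp (1/2)"
    using exp_ge_add_one_self[of "1/2 :: real"] by (intro mult_left_mono) auto
  also have "\<dots> = exp (5/2)"
    by (simp flip: exp_add)
  finally show ?thesis
    using ln_less_cancel_iff[of "1 + exp 2" "exp (5/2 :: real)"] by (simp add: add_pos_pos)
qed

lemma exp_two_less: "exp (2 :: real) < 15/2"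
proof -
  have "exp (2 :: real) = exp 1 * exp 1" by (simp add: exp_add[symmetric])
  also have "\<dots> < 272/100 * (272/100)"
    using e_less_272 by (intro mult_strict_mono) auto
  finally show ?thesis by simp
qed

lemma fA2_riemann_sum_less:
  assumes "0 < x" and "0 < h" and "T = sqrt (real N * h / 4)" and "sqrt x \<le> exp (2 - T)"
  shows "h * (\<Sum>j=1..N. fA2 T (real j * h) x) < 2 * sqrt x"
proof -
  have "sqrt (real N * h) = 2 * T"
    using assms(3) by (simp add: real_sqrt_divide)
  then have "h * (\<Sum>j=1..N. fA2 T (real j * h) x)
      \<le> fA2_sum_primitive T x (2 * T) - fA2_sum_primitive T x 0"
    using fA2_riemann_sum_le_sum_primitive[OF assms(1,2), where N = N and T = T] by simp
  also have "\<dots> \<le> 5/2 * sqrt x / pi * ln (1 + exp 2)"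
    by (rule fA2_sum_primitive_increment_le[OF assms(1,4)])
  also have "\<dots> \<le> 5/2 * sqrt x / pi * (5/2)"
    using ln_one_plus_exp_two_less assms(1) by (intro mult_left_mono) auto
  also have "\<dots> < 2 * sqrt x"
    using pi_approx(1) assms(1) by (simp add: field_simps)
  finally show ?thesis .
qed

theorem lemmaA2:
  fixes h :: real and Nt :: nat and T x :: real
  assumes "h > 0" and "Nt \<ge> 1" and "T = sqrt (real Nt * h / 4)"
    and "0 \<le> x" and "x \<le> exp (4 - 2 * T)"
  shows "\<bar>integral {0..4 * T^2} (\<lambda>u. fA2 T u x) - h * (\<Sum>j=1..Nt. fA2 T (real j * h) x)\<bar> < 2 * exp (2 - T)
       \<and> 2 * exp (2 - T) < 15 * exp (- T)"
proof
  show "2 * exp (2 - T) < 15 * exp (- T)"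
    using exp_two_less by (simp add: exp_diff exp_minus field_simps)
  show "\<bar>integral {0..4 * T^2} (\<lambda>u. fA2 T u x) - h * (\<Sum>j=1..Nt. fA2 T (real j * h) x)\<bar> < 2 * exp (2 - T)"
  proof (cases "x = 0")
    case True
    then show ?thesis by (simp add: fA2_def)
  next
    case False
    then have "0 < x" using assms(4) by simp
    have "sqrt x \<le> exp (2 - T)"
      using assms(5) by (intro real_le_lsqrt) (auto simp: power2_eq_square exp_add[symmetric])
    moreover note integral_fA2_bounds[OF \<open>0 < x\<close>, of 0 "4 * T^2" T]
    moreover have "0 \<le> h * (\<Sum>j=1..Nt. fA2 T (real j * h) x)"
      using assms by (intro mult_nonneg_nonneg sum_nonneg fA2_nonneg) auto
    moreover note fA2_riemann_sum_less[OF \<open>0 < x\<close> assms(1,3) \<open>sqrt x \<le> exp (2 - T)\<close>]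
    ultimately show ?thesis by simp
  qed
qed

end
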